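(* Let $M$ be a symmetric homogeneous stable mean having a symmetric asymptotic expansion with coefficients $(a_n)$. Then, as $x\to\infty$, $$M(x-t,x+t)=x+a_1t^2x^{-1}+\tfrac16a_1(1+a_1)(1-4a_1)t^4x^{-3}+\tfrac1{90}a_1(1+a_1)(6-31a_1+36a_1^2+64a_1^3)t^6x^{-5}$$ $$+\tfrac1{2520}a_1(1+a_1)\big(90-531a_1+937a_1^2+568a_1^3-3088a_1^4-2176a_1^5\big)t^8x^{-7}+O(x^{-9}).$$
   Context: A bi-variate mean is $M:(0,\infty)^2\to(0,\infty)$ with $\min(s,t)\le M(s,t)\le\max(s,t)$; symmetric: $M(s,t)=M(t,s)$; homogeneous: $M(\lambda s,\lambda t)=\lambda M(s,t)$. $M$ is stable if $M(s,t)=M\big(M(s,M(s,t)),M(M(s,t),t)\big)$ for all $s,t>0$. $M$ has a symmetric asymptotic expansion with coefficients $(a_n)$ if for every fixed real $t$ and every $N\ge0$, $M(x-t,x+t)=\sum_{n=0}^Na_nt^{2n}x^{-2n+1}+o(x^{-2N+1})$ as $x\to\infty$. *)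

theory Defs
  imports "HOL-Analysis.Analysis" "HOL-Library.Landau_Symbols"
begin

text \<open>A bivariate mean on (0,inf)^2; values outside the domain are irrelevant.\<close>
definition is_mean :: "(real \<Rightarrow> real \<Rightarrow> real) \<Rightarrow> bool" where
  "is_mean M \<longleftrightarrow> (\<forall>s t. s > 0 \<longrightarrow> t > 0 \<longrightarrow> min s t \<le> M s t \<and> M s t \<le> max s t)"

definition symmetric_mean :: "(real \<Rightarrow> real \<Rightarrow> real) \<Rightarrow> bool" where
  "symmetric_mean M \<longleftrightarrow> (\<forall>s t. s > 0 \<longrightarrow> t > 0 \<longrightarrow> M s t = M t s)"

definition homogeneous_mean :: "(real \<Rightarrow> real \<Rightarrow> real) \<Rightarrow> bool" where
  "homogeneous_mean M \<longleftrightarrow>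
     (\<forall>l s t. l > 0 \<longrightarrow> s > 0 \<longrightarrow> t > 0 \<longrightarrow> M (l * s) (l * t) = l * M s t)"

definition stable_mean :: "(real \<Rightarrow> real \<Rightarrow> real) \<Rightarrow> bool" where
  "stable_mean M \<longleftrightarrow>
     (\<forall>s t. s > 0 \<longrightarrow> t > 0 \<longrightarrow> M s t = M (M s (M s t)) (M (M s t) t))"

definition has_sym_asymp_expansion :: "(real \<Rightarrow> real \<Rightarrow> real) \<Rightarrow> (nat \<Rightarrow> real) \<Rightarrow> bool" where
  "has_sym_asymp_expansion M a \<longleftrightarrow>
     (\<forall>(t::real) (N::nat).
        (\<lambda>x. M (x - t) (x + t) - (\<Sum>n\<le>N. a n * t ^ (2 * n) * x powi (1 - 2 * int n)))
          \<in> o[at_top](\<lambda>x. x powi (1 - 2 * int N)))"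

end

theory Submission
  imports Defs "HOL-Computational_Algebra.Polynomial"
begin

text \<open>
  Write \<open>F(u) = M(1 - u, 1 + u)\<close>. By homogeneity \<open>M(s, t) = (s + t)/2 \<cdot> F((t - s)/(s + t))\<close>,
  and the expansion (read at \<open>x = 1/u\<close>) together with the symmetry of \<open>M\<close> says that
  \<open>F(u) = 1 + a\<^sub>1u\<^sup>2 + a\<^sub>2u\<^sup>4 + a\<^sub>3u\<^sup>6 + a\<^sub>4u\<^sup>8 + O(u\<^sup>1\<^sup>0)\<close> at \<open>0\<close>.
  Stability at \<open>(1 - u, 1 + u)\<close> says \<open>F(u) = M(A(u), A(-u))\<close> with \<open>A(u) = M(1 - u, F(u))\<close>.
  Expressing both means through \<open>F\<close> gives \<open>A(u) = c(u) F(v(u))\<close> and \<open>F(u) = s(u) F(w(u))\<close>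
  with explicit quotients \<open>v\<close>, \<open>w\<close> of expressions in \<open>u\<close>, \<open>F\<close> and \<open>A\<close>. Expanding the right-hand
  side to order 10 is a finite computation with truncated polynomials, and comparing the
  coefficients of \<open>u\<^sup>4\<close>, \<open>u\<^sup>6\<close>, \<open>u\<^sup>8\<close> with those of \<open>F\<close> determines \<open>a\<^sub>2\<close>, \<open>a\<^sub>3\<close>, \<open>a\<^sub>4\<close> in terms of \<open>a\<^sub>1\<close>.
\<close>

section \<open>Agreement to a given order at zero\<close>

text \<open>The filter \<open>nhds 0\<close> (rather than \<open>at 0\<close>) makes the relation stable under
  composition with functions that vanish at \<open>0\<close>.\<close>

definition agree_to_order :: "nat \<Rightarrow> (real \<Rightarrow> real) \<Rightarrow> (real \<Rightarrow> real) \<Rightarrow> bool" where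
  "agree_to_order n f g \<longleftrightarrow> (\<lambda>u. f u - g u) \<in> O[nhds 0](\<lambda>u. u ^ n)"

lemma bigo_imp_tendsto_zero:
  fixes f g :: "'a \<Rightarrow> real"
  assumes "f \<in> O[F](g)" "(g \<longlongrightarrow> 0) F"
  shows "(f \<longlongrightarrow> 0) F"
proof -
  from assms(1) obtain c where "eventually (\<lambda>x. norm (f x) \<le> c * norm (g x)) F"
    by (elim landau_o.bigE)
  moreover have "((\<lambda>x. c * norm (g x)) \<longlongrightarrow> 0) F"
    using tendsto_mult_right_zero[OF tendsto_norm_zero[OF assms(2)]] .
  ultimately show ?thesis
    by (rule Lim_null_comparison)
qed

lemma isCont_imp_bigo_1:
  fixes g :: "real \<Rightarrow> real"
  assumes "isCont g 0"
  shows "g \<in> O[nhds 0](\<lambda>_. 1)"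
  using assms by (intro bigoI_tendsto[where c = "g 0"]) (simp_all add: isCont_def tendsto_at_iff_tendsto_nhds)

lemma bigo_nhds_of_at:
  fixes f g :: "real \<Rightarrow> real"
  assumes "f \<in> O[at x](g)" "f x = 0"
  shows "f \<in> O[nhds x](g)"
proof -
  from assms(1) obtain c where "c > 0" "eventually (\<lambda>y. norm (f y) \<le> c * norm (g y)) (at x)"
    by (elim landau_o.bigE)
  with assms(2) have "eventually (\<lambda>y. norm (f y) \<le> c * norm (g y)) (nhds x)"
    by (simp add: eventually_nhds_conv_at)
  then show ?thesis
    by (rule bigoI)
qed

lemma eventually_abs_less_nhds_0:
  assumes "r > 0"
  shows "eventually (\<lambda>u::real. \<bar>u\<bar> < r) (nhds 0)"
proof -
  have "eventually (\<lambda>u. u \<in> {-r<..<r}) (nhds 0)"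
    using assms by (intro eventually_nhds_in_open) auto
  then show ?thesis
    by eventually_elim auto
qed

lemma agree_to_order_refl: "agree_to_order n f f"
  by (simp add: agree_to_order_def)

lemma agree_to_order_sym: "agree_to_order n f g \<Longrightarrow> agree_to_order n g f"
  unfolding agree_to_order_def by (subst landau_o.big.uminus_in_iff [symmetric]) simp

lemma agree_to_order_trans [trans]:
  "agree_to_order n f g \<Longrightarrow> agree_to_order n g h \<Longrightarrow> agree_to_order n f h"
  unfolding agree_to_order_def by (drule (1) sum_in_bigo(1)) simp

lemma agree_to_order_eventually_eq:
  "eventually (\<lambda>u. f u = g u) (nhds 0) \<Longrightarrow> agree_to_order n f g"
  unfolding agree_to_order_def
  by (subst landau_o.big.in_cong[where g = "\<lambda>_. 0"]) (auto elim: eventually_mono)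

lemma agree_to_order_add:
  "agree_to_order n f g \<Longrightarrow> agree_to_order n f' g' \<Longrightarrow>
    agree_to_order n (\<lambda>u. f u + f' u) (\<lambda>u. g u + g' u)"
  unfolding agree_to_order_def by (drule (1) sum_in_bigo(1)) (simp add: algebra_simps)

lemma agree_to_order_diff:
  "agree_to_order n f g \<Longrightarrow> agree_to_order n f' g' \<Longrightarrow>
    agree_to_order n (\<lambda>u. f u - f' u) (\<lambda>u. g u - g' u)"
  unfolding agree_to_order_def by (drule (1) sum_in_bigo(2)) (simp add: algebra_simps)

lemma agree_to_order_cmult:
  "agree_to_order n f g \<Longrightarrow> agree_to_order n (\<lambda>u. c * f u) (\<lambda>u. c * g u)"
  by (cases "c = 0") (simp_all add: agree_to_order_def flip: right_diff_distrib)

lemma agree_to_order_bigo_1: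
  assumes "agree_to_order n f g" "g \<in> O[nhds 0](\<lambda>_. 1)"
  shows "f \<in> O[nhds 0](\<lambda>_. 1)"
proof -
  have "(\<lambda>u::real. u ^ n) \<in> O[nhds 0](\<lambda>_. 1)"
    by (intro isCont_imp_bigo_1 continuous_intros)
  with assms(1) have "(\<lambda>u. f u - g u) \<in> O[nhds 0](\<lambda>_. 1)"
    unfolding agree_to_order_def by (rule landau_o.big_trans)
  from sum_in_bigo(1)[OF this assms(2)] show ?thesis
    by simp
qed

lemma agree_to_order_mult:
  assumes "agree_to_order n f g" "agree_to_order n f' g'"
    and "g \<in> O[nhds 0](\<lambda>_. 1)" "g' \<in> O[nhds 0](\<lambda>_. 1)"
  shows "agree_to_order n (\<lambda>u. f u * f' u) (\<lambda>u. g u * g' u)"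
proof -
  have "(\<lambda>u. f u * (f' u - g' u)) \<in> O[nhds 0](\<lambda>u. 1 * u ^ n)"
    using agree_to_order_bigo_1[OF assms(1,3)] assms(2)
    unfolding agree_to_order_def by (rule landau_o.big.mult)
  moreover have "(\<lambda>u. (f u - g u) * g' u) \<in> O[nhds 0](\<lambda>u. u ^ n * 1)"
    using assms(1,4) unfolding agree_to_order_def by (rule landau_o.big.mult)
  ultimately show ?thesis
    unfolding agree_to_order_def by (auto dest: sum_in_bigo(1) simp: algebra_simps)
qed

lemma agree_to_order_tendsto:
  assumes "agree_to_order n f g" "0 < n" "isCont g 0"
  shows "(f \<longlongrightarrow> g 0) (nhds 0)"
proof -
  have "((\<lambda>u::real. u ^ n) \<longlongrightarrow> 0) (nhds 0)"
    using assms(2) by (auto intro!: tendsto_eq_intros filterlim_ident)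
  with assms(1) have "((\<lambda>u. f u - g u) \<longlongrightarrow> 0) (nhds 0)"
    unfolding agree_to_order_def by (rule bigo_imp_tendsto_zero)
  moreover have "(g \<longlongrightarrow> g 0) (nhds 0)"
    using assms(3) by (simp add: isCont_def tendsto_at_iff_tendsto_nhds)
  ultimately show ?thesis
    by (auto dest: tendsto_add)
qed

lemma agree_to_order_compose:
  assumes "agree_to_order n F G" "v \<in> O[nhds 0](\<lambda>u. u)"
  shows "agree_to_order n (\<lambda>u. F (v u)) (\<lambda>u. G (v u))"
proof -
  have "filterlim v (nhds 0) (nhds 0)"
    using assms(2) filterlim_ident by (rule bigo_imp_tendsto_zero)
  with assms(1) have "(\<lambda>u. F (v u) - G (v u)) \<in> O[nhds 0](\<lambda>u. v u ^ n)"
    unfolding agree_to_order_def by (rule landau_o.big.compose)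
  also have "(\<lambda>u. v u ^ n) \<in> O[nhds 0](\<lambda>u. u ^ n)"
    using assms(2) by (rule landau_o.big_power)
  finally show ?thesis
    unfolding agree_to_order_def .
qed

section \<open>Agreement with polynomials\<close>

lemma poly_bigo_power_imp_coeff_eq_0:
  fixes p :: "real poly"
  assumes "poly p \<in> O[at 0](\<lambda>u. u ^ n)" "k < n"
  shows "coeff p k = 0"
  using assms
proof (induction n arbitrary: p k)
  case 0
  from \<open>k < 0\<close> show ?case
    by simp
next
  case (Suc n)
  obtain c p' where p: "p = pCons c p'"
    by (rule pCons_cases)
  have "(poly p \<longlongrightarrow> poly p 0) (at 0)"
    using poly_isCont[of 0 p] by (simp only: isCont_def)
  moreover have "((\<lambda>u::real. u ^ Suc n) \<longlongrightarrow> 0 ^ Suc n) (at 0)"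
    by (intro tendsto_power tendsto_ident_at)
  then have "(poly p \<longlongrightarrow> 0) (at 0)"
    using bigo_imp_tendsto_zero[OF Suc.prems(1)] by simp
  ultimately have "poly p 0 = 0"
    by (rule LIM_unique)
  then have c: "c = 0"
    by (simp add: p)
  then have "poly p = (\<lambda>u. u * poly p' u)"
    by (simp add: p fun_eq_iff)
  with Suc.prems(1) have "(\<lambda>u. u * poly p' u) \<in> O[at 0](\<lambda>u. u * u ^ n)"
    by (simp only: power_Suc)
  then have p': "poly p' \<in> O[at 0](\<lambda>u. u ^ n)"
    using landau_o.big.mult_cancel_left[OF bigtheta_refl eventually_neq_at_within] by blast
  show ?case
  proof (cases k)
    case (Suc j)
    with Suc.IH[OF p'] Suc.prems(2) p show ?thesis
      by simp
  qed (simp add: p c)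
qed

lemma agree_to_order_poly_iff:
  "agree_to_order n (poly p) (poly q) \<longleftrightarrow> poly_cutoff n p = poly_cutoff n q"
proof
  assume "agree_to_order n (poly p) (poly q)"
  then have "(\<lambda>u. poly (p - q) u) \<in> O[nhds 0](\<lambda>u. u ^ n)"
    by (simp only: agree_to_order_def poly_diff)
  then have "poly (p - q) \<in> O[at 0](\<lambda>u. u ^ n)"
    by (rule landau_o.big.filter_mono[rotated]) (simp add: at_within_def)
  then have "coeff (p - q) k = 0" if "k < n" for k
    using that by (rule poly_bigo_power_imp_coeff_eq_0)
  then show "poly_cutoff n p = poly_cutoff n q"
    by (simp add: poly_eq_iff coeff_poly_cutoff)
next
  assume "poly_cutoff n p = poly_cutoff n q"
  then have "monom 1 n dvd p - q"
    by (auto simp: monom_1_dvd_iff' poly_eq_iff coeff_poly_cutoff split: if_splits)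
  then obtain r where r: "p - q = monom 1 n * r" ..
  have "(\<lambda>u. u ^ n * poly r u) \<in> O[nhds 0](\<lambda>u. u ^ n * 1)"
    by (intro landau_o.big.mult_left isCont_imp_bigo_1 poly_isCont)
  moreover have "poly p u - poly q u = u ^ n * poly r u" for u
    using arg_cong[OF r, of "\<lambda>s. poly s u"] by (simp add: poly_monom)
  ultimately show "agree_to_order n (poly p) (poly q)"
    by (simp add: agree_to_order_def)
qed

lemma agree_to_order_mult_poly:
  assumes "agree_to_order n f (poly p)" "agree_to_order n g (poly q)"
    and "poly_cutoff n (p * q) = poly_cutoff n r"
  shows "agree_to_order n (\<lambda>u. f u * g u) (poly r)"
proof -
  have "agree_to_order n (\<lambda>u. f u * g u) (\<lambda>u. poly (p * q) u)"
    unfolding poly_mult using assms(1,2)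
    by (rule agree_to_order_mult) (simp_all add: isCont_imp_bigo_1)
  also have "agree_to_order n (poly (p * q)) (poly r)"
    using assms(3) by (simp add: agree_to_order_poly_iff)
  finally show ?thesis .
qed

lemma agree_to_order_divide_poly:
  assumes f: "agree_to_order n f (poly p)" and g: "agree_to_order n g (poly q)"
    and "poly_cutoff n (r * q) = poly_cutoff n p" "coeff q 0 \<noteq> 0" "0 < n"
  shows "agree_to_order n (\<lambda>u. f u / g u) (poly r)"
proof -
  have "agree_to_order n (\<lambda>u. f u - poly r u * g u) (\<lambda>u. poly p u - poly r u * poly q u)"
    using agree_to_order_refl g
    by (intro agree_to_order_diff f agree_to_order_mult) (simp_all add: isCont_imp_bigo_1)
  also have "agree_to_order n (poly p) (poly (r * q))"
    using assms(3) by (simp add: agree_to_order_poly_iff)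
  then have "agree_to_order n (\<lambda>u. poly p u - poly r u * poly q u) (\<lambda>_. 0)"
    by (simp add: agree_to_order_def poly_mult)
  finally have "agree_to_order n (\<lambda>u. f u - poly r u * g u) (\<lambda>_. 0)" .
  moreover have lim: "(g \<longlongrightarrow> coeff q 0) (nhds 0)"
    using agree_to_order_tendsto[OF g assms(5)] by (simp add: poly_0_coeff_0)
  then have "((\<lambda>u. 1 / g u / 1) \<longlongrightarrow> 1 / coeff q 0) (nhds 0)"
    using assms(4) by (simp add: tendsto_divide)
  then have "(\<lambda>u. 1 / g u) \<in> O[nhds 0](\<lambda>_. 1)"
    by (rule bigoI_tendsto) simp
  ultimately have "(\<lambda>u. (f u - poly r u * g u) * (1 / g u)) \<in> O[nhds 0](\<lambda>u. u ^ n * 1)"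
    unfolding agree_to_order_def diff_zero by (rule landau_o.big.mult)
  moreover have "eventually (\<lambda>u. g u \<noteq> 0) (nhds 0)"
    using lim assms(4) by (rule tendsto_imp_eventually_ne)
  then have "eventually (\<lambda>u. (f u - poly r u * g u) * (1 / g u) = f u / g u - poly r u) (nhds 0)"
    by (auto elim!: eventually_mono simp: field_simps)
  ultimately show ?thesis
    unfolding agree_to_order_def using landau_o.big.in_cong by fastforce
qed

lemma agree_to_order_reflect_poly:
  assumes "agree_to_order n f (poly p)"
  shows "agree_to_order n (\<lambda>u. f (- u)) (poly (pcompose p [:0, -1:]))"
proof -
  have "agree_to_order n (\<lambda>u. f (- u)) (\<lambda>u. poly p (- u))"
    using assms by (rule agree_to_order_compose) simp
  moreover have "poly (pcompose p [:0, -1:]) = (\<lambda>u. poly p (- u))"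
    by (simp add: fun_eq_iff poly_pcompose)
  ultimately show ?thesis
    by simp
qed

lemma agree_to_order_poly_imp_bigo_id:
  assumes "agree_to_order n v (poly p)" "coeff p 0 = 0" "0 < n"
  shows "v \<in> O[nhds 0](\<lambda>u. u)"
proof -
  obtain p' where p: "p = pCons 0 p'"
    using assms(2) by (metis coeff_pCons_0 pCons_cases)
  have "(\<lambda>u::real. u ^ (n - 1)) \<in> O[nhds 0](\<lambda>_. 1)"
    by (intro isCont_imp_bigo_1 continuous_intros)
  from landau_o.big.mult[OF landau_o.big_refl[of "\<lambda>u. u"] this]
  have "(\<lambda>u::real. u * u ^ (n - 1)) \<in> O[nhds 0](\<lambda>u. u * 1)" .
  then have "(\<lambda>u::real. u ^ n) \<in> O[nhds 0](\<lambda>u. u)"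
    using assms(3) by (cases n) simp_all
  with assms(1) have diff: "(\<lambda>u. v u - poly p u) \<in> O[nhds 0](\<lambda>u. u)"
    unfolding agree_to_order_def by (rule landau_o.big_trans)
  have "(\<lambda>u. u * poly p' u) \<in> O[nhds 0](\<lambda>u. u * 1)"
    by (rule landau_o.big.mult[OF landau_o.big_refl isCont_imp_bigo_1]) simp
  moreover have "poly p = (\<lambda>u. u * poly p' u)"
    by (simp add: p fun_eq_iff)
  ultimately have "poly p \<in> O[nhds 0](\<lambda>u. u)"
    by simp
  from sum_in_bigo(1)[OF diff this] show ?thesis
    by simp
qed

lemma agree_to_order_compose_even_octic:
  assumes F: "agree_to_order n F (poly [:1, 0, b1, 0, b2, 0, b3, 0, b4:])"
    and v: "agree_to_order n v (poly V)" "coeff V 0 = 0" "0 < n"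
    and V2: "poly_cutoff n (V * V) = poly_cutoff n V2"
    and V4: "poly_cutoff n (V2 * V2) = poly_cutoff n V4"
    and V6: "poly_cutoff n (V4 * V2) = poly_cutoff n V6"
    and V8: "poly_cutoff n (V4 * V4) = poly_cutoff n V8"
  shows "agree_to_order n (\<lambda>u. F (v u))
    (poly (1 + smult b1 V2 + smult b2 V4 + smult b3 V6 + smult b4 V8))"
proof -
  define v2 where "v2 u = v u * v u" for u
  define v4 where "v4 u = v2 u * v2 u" for u
  have v2: "agree_to_order n v2 (poly V2)"
    unfolding v2_def using v(1) v(1) V2 by (rule agree_to_order_mult_poly)
  have v4: "agree_to_order n v4 (poly V4)"
    unfolding v4_def using v2 v2 V4 by (rule agree_to_order_mult_poly)
  have v6: "agree_to_order n (\<lambda>u. v4 u * v2 u) (poly V6)"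
    using v4 v2 V6 by (rule agree_to_order_mult_poly)
  have v8: "agree_to_order n (\<lambda>u. v4 u * v4 u) (poly V8)"
    using v4 v4 V8 by (rule agree_to_order_mult_poly)
  have "agree_to_order n (\<lambda>u. F (v u)) (\<lambda>u. poly [:1, 0, b1, 0, b2, 0, b3, 0, b4:] (v u))"
    using F agree_to_order_poly_imp_bigo_id[OF v] by (rule agree_to_order_compose)
  also have "(\<lambda>u. poly [:1, 0, b1, 0, b2, 0, b3, 0, b4:] (v u)) =
      (\<lambda>u. 1 + b1 * v2 u + b2 * v4 u + b3 * (v4 u * v2 u) + b4 * (v4 u * v4 u))"
    by (simp add: v2_def v4_def fun_eq_iff algebra_simps)
  also have "agree_to_order n \<dots>
      (\<lambda>u. 1 + b1 * poly V2 u + b2 * poly V4 u + b3 * poly V6 u + b4 * poly V8 u)"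
    by (intro agree_to_order_add agree_to_order_cmult agree_to_order_refl v2 v4 v6 v8)
  also have "\<dots> = poly (1 + smult b1 V2 + smult b2 V4 + smult b3 V6 + smult b4 V8)"
    by (simp add: fun_eq_iff)
  finally show ?thesis .
qed

lemma coeff_pCons_numeral: "coeff (pCons a p) (numeral n) = coeff p (pred_numeral n)"
  by (simp add: numeral_eq_Suc)

lemma all_less_numeral: "(\<forall>k<numeral n. P k) \<longleftrightarrow> P (pred_numeral n) \<and> (\<forall>k<pred_numeral n. P (k::nat))"
  by (simp add: numeral_eq_Suc All_less_Suc)

lemma poly_cutoff_eq_iff: "poly_cutoff n p = poly_cutoff n q \<longleftrightarrow> (\<forall>k<n. coeff p k = coeff q k)"
  by (auto simp: poly_eq_iff coeff_poly_cutoff)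

text \<open>
  These rules reduce a comparison of truncations of explicit polynomials to one ring identity per
  coefficient, without normalising the arithmetic. Clearing the rational denominators before
  \<open>algebra\<close> is necessary: \<open>algebra\<close> fails on some of these identities otherwise.
\<close>

lemmas jet_simps = poly_cutoff_eq_iff all_less_numeral pred_numeral_simps BitM.simps not_less0 simp_thms
  coeff_pCons_numeral coeff_pCons_0 coeff_0 coeff_add coeff_diff coeff_smult coeff_pcompose_linear
  mult_pCons_left mult_zero_left smult_pCons add_pCons diff_pCons pCons_0_0 smult_0_right
  add_0 add_0_right diff_0 diff_0_right one_pCons

section \<open>Order-10 jets in the stability equation\<close>

text \<open>
  With \<open>F\<close> the profile of the mean and \<open>A(u) = M(1 - u, F(u))\<close>, homogeneity gives
  \<open>A(u) = (1 - u + F(u))/2 \<cdot> F(v(u))\<close> and \<open>F(u) = (A(u) + A(-u))/2 \<cdot> F(w(u))\<close> where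
  \<open>v(u) = (F(u) - (1 - u))/(1 - u + F(u))\<close> and \<open>w(u) = (A(-u) - A(u))/(A(u) + A(-u))\<close>.
  The tables below are the jets of order 10 of \<open>v\<close>, \<open>w\<close> and their even powers, as polynomials
  in the coefficients \<open>a\<^sub>1, \<dots>, a\<^sub>4\<close>; they were obtained by series division and multiplication and
  are only checked here.
\<close>

definition profile_jet :: "(nat \<Rightarrow> real) \<Rightarrow> real poly" where
  "profile_jet a = [:1, 0, a 1, 0, a 2, 0, a 3, 0, a 4:]"

definition v_jet :: "(nat \<Rightarrow> real) \<Rightarrow> real poly" where
  "v_jet a = [:0, 1/2,
    1/4 + 1/2 * a 1,
    1/8,
    1/16 + 1/2 * a 2 - 1/8 * a 1 - 1/4 * a 1 ^ 2,
    1/32 - 1/8 * a 1 - 1/8 * a 1 ^ 2,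
    1/64 + 1/2 * a 3 - 1/8 * a 2 - 3/32 * a 1 - 1/2 * a 1 * a 2 + 1/8 * a 1 ^ 3,
    1/128 - 1/8 * a 2 - 1/16 * a 1 - 1/4 * a 1 * a 2 + 1/16 * a 1 ^ 2 + 1/8 * a 1 ^ 3,
    1/256 + 1/2 * a 4 - 1/8 * a 3 - 3/32 * a 2 - 5/128 * a 1 - 1/4 * a 2 ^ 2 - 1/2 * a 1 * a 3
      + 5/64 * a 1 ^ 2 + 3/8 * a 1 ^ 2 * a 2 + 1/16 * a 1 ^ 3 - 1/16 * a 1 ^ 4,
    1/512 - 1/8 * a 3 - 1/16 * a 2 - 3/128 * a 1 - 1/8 * a 2 ^ 2 - 1/4 * a 1 * a 3
      + 1/8 * a 1 * a 2 + 9/128 * a 1 ^ 2 + 3/8 * a 1 ^ 2 * a 2 - 3/32 * a 1 ^ 4:]"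

definition v2_jet :: "(nat \<Rightarrow> real) \<Rightarrow> real poly" where
  "v2_jet a = [:0, 0, 1/4,
    1/4 + 1/2 * a 1,
    3/16 + 1/4 * a 1 + 1/4 * a 1 ^ 2,
    1/8 + 1/2 * a 2 - 1/4 * a 1 ^ 2,
    5/64 + 1/4 * a 2 - 1/8 * a 1 + 1/2 * a 1 * a 2 - 3/8 * a 1 ^ 2 - 1/4 * a 1 ^ 3,
    3/64 + 1/2 * a 3 - 5/32 * a 1 - 1/2 * a 1 * a 2 - 1/4 * a 1 ^ 2,
    7/256 + 1/4 * a 3 - 1/8 * a 2 - 9/64 * a 1 + 1/4 * a 2 ^ 2 + 1/2 * a 1 * a 3
      - 3/4 * a 1 * a 2 - 5/64 * a 1 ^ 2 - 3/4 * a 1 ^ 2 * a 2 + 1/4 * a 1 ^ 3 + 3/16 * a 1 ^ 4,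
    1/64 + 1/2 * a 4 - 5/32 * a 2 - 7/64 * a 1 - 1/4 * a 2 ^ 2 - 1/2 * a 1 * a 3
      - 1/2 * a 1 * a 2 + 3/64 * a 1 ^ 2 + 5/16 * a 1 ^ 3 + 1/8 * a 1 ^ 4:]"

definition v4_jet :: "(nat \<Rightarrow> real) \<Rightarrow> real poly" where
  "v4_jet a = [:0, 0, 0, 0, 1/16,
    1/8 + 1/4 * a 1,
    5/32 + 3/8 * a 1 + 3/8 * a 1 ^ 2,
    5/32 + 1/4 * a 2 + 5/16 * a 1 + 1/4 * a 1 ^ 2 + 1/4 * a 1 ^ 3,
    35/256 + 3/8 * a 2 + 5/32 * a 1 + 3/4 * a 1 * a 2 - 5/32 * a 1 ^ 2 - 1/4 * a 1 ^ 3
      + 1/16 * a 1 ^ 4,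
    7/64 + 1/4 * a 3 + 5/16 * a 2 + 1/2 * a 1 * a 2 - 15/32 * a 1 ^ 2 + 3/4 * a 1 ^ 2 * a 2
      - 5/8 * a 1 ^ 3 - 3/8 * a 1 ^ 4:]"

definition v6_jet :: "(nat \<Rightarrow> real) \<Rightarrow> real poly" where
  "v6_jet a = [:0, 0, 0, 0, 0, 0, 1/64,
    3/64 + 3/32 * a 1,
    21/256 + 15/64 * a 1 + 15/64 * a 1 ^ 2,
    7/64 + 3/32 * a 2 + 21/64 * a 1 + 27/64 * a 1 ^ 2 + 5/16 * a 1 ^ 3:]"

definition v8_jet :: "(nat \<Rightarrow> real) \<Rightarrow> real poly" where
  "v8_jet a = [:0, 0, 0, 0, 0, 0, 0, 0, 1/256,
    1/64 + 1/32 * a 1:]"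

definition inner_mean_jet :: "(nat \<Rightarrow> real) \<Rightarrow> real poly" where
  "inner_mean_jet a = smult (1/2) ([:1, -1:] + profile_jet a) *
     (1 + smult (a 1) (v2_jet a) + smult (a 2) (v4_jet a) + smult (a 3) (v6_jet a) + smult (a 4) (v8_jet a))"

definition inner_mean_sum_jet :: "(nat \<Rightarrow> real) \<Rightarrow> real poly" where
  "inner_mean_sum_jet a = inner_mean_jet a + pcompose (inner_mean_jet a) [:0, -1:]"

definition w_jet :: "(nat \<Rightarrow> real) \<Rightarrow> real poly" where
  "w_jet a = [:0, 1/2, 0,
    - 1/2 * a 1 - 1/2 * a 1 ^ 2,
    0,
    - 3/8 * a 2 - 1/16 * a 1 - 3/4 * a 1 * a 2 + 5/16 * a 1 ^ 2 + 3/8 * a 1 ^ 3,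
    0,
    - 19/64 * a 3 - 1/8 * a 2 - 1/64 * a 1 - 1/4 * a 2 ^ 2 - 19/32 * a 1 * a 3
      + 11/64 * a 1 * a 2 + 1/8 * a 1 ^ 2 + 15/32 * a 1 ^ 2 * a 2 - 1/64 * a 1 ^ 3
      - 1/4 * a 1 ^ 3 * a 2 - 1/32 * a 1 ^ 4 + 1/8 * a 1 ^ 5,
    0,
    - 17/64 * a 4 - 25/256 * a 3 - 9/128 * a 2 - 1/256 * a 1 - 11/32 * a 2 * a 3
      - 15/128 * a 2 ^ 2 - 17/32 * a 1 * a 4 + 11/128 * a 1 * a 3 + 53/256 * a 1 * a 2
      + 13/256 * a 1 ^ 2 - 9/64 * a 1 * a 2 ^ 2 + 15/64 * a 1 ^ 2 * a 3 + 73/128 * a 1 ^ 2 * a 2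
      - 29/256 * a 1 ^ 3 - 3/4 * a 1 ^ 2 * a 2 ^ 2 - 5/16 * a 1 ^ 3 * a 3 + 59/64 * a 1 ^ 3 * a 2
      - 53/256 * a 1 ^ 4 + 17/16 * a 1 ^ 4 * a 2 - 37/128 * a 1 ^ 5 - 1/4 * a 1 ^ 6:]"

definition w2_jet :: "(nat \<Rightarrow> real) \<Rightarrow> real poly" where
  "w2_jet a = [:0, 0, 1/4, 0,
    - 1/2 * a 1 - 1/2 * a 1 ^ 2,
    0,
    - 3/8 * a 2 - 1/16 * a 1 - 3/4 * a 1 * a 2 + 9/16 * a 1 ^ 2 + 7/8 * a 1 ^ 3 + 1/4 * a 1 ^ 4,
    0,
    - 19/64 * a 3 - 1/8 * a 2 - 1/64 * a 1 - 1/4 * a 2 ^ 2 - 19/32 * a 1 * a 3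
      + 35/64 * a 1 * a 2 + 3/16 * a 1 ^ 2 + 51/32 * a 1 ^ 2 * a 2 - 17/64 * a 1 ^ 3
      + 1/2 * a 1 ^ 3 * a 2 - 23/32 * a 1 ^ 4 - 1/4 * a 1 ^ 5:]"

definition w4_jet :: "(nat \<Rightarrow> real) \<Rightarrow> real poly" where
  "w4_jet a = [:0, 0, 0, 0, 1/16, 0,
    - 1/4 * a 1 - 1/4 * a 1 ^ 2,
    0,
    - 3/16 * a 2 - 1/32 * a 1 - 3/8 * a 1 * a 2 + 17/32 * a 1 ^ 2 + 15/16 * a 1 ^ 3
      + 3/8 * a 1 ^ 4:]"

definition w6_jet :: "(nat \<Rightarrow> real) \<Rightarrow> real poly" where
  "w6_jet a = [:0, 0, 0, 0, 0, 0, 1/64, 0,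
    - 3/32 * a 1 - 3/32 * a 1 ^ 2:]"

definition w8_jet :: "(nat \<Rightarrow> real) \<Rightarrow> real poly" where
  "w8_jet a = [:0, 0, 0, 0, 0, 0, 0, 0, 1/256:]"

definition stability_rhs_jet :: "(nat \<Rightarrow> real) \<Rightarrow> real poly" where
  "stability_rhs_jet a =
     (1 + smult (a 1) (w2_jet a) + smult (a 2) (w4_jet a) + smult (a 3) (w6_jet a) + smult (a 4) (w8_jet a))
     * smult (1/2) (inner_mean_sum_jet a)"

lemma coeff_inner_mean_sum_jet_0: "coeff (inner_mean_sum_jet a) 0 = 2"
  by (simp add: inner_mean_sum_jet_def inner_mean_jet_def profile_jet_def v2_jet_def v4_jet_def
      v6_jet_def v8_jet_def coeff_mult_0 poly_0_coeff_0)

lemma v_jet_quotient: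
  "poly_cutoff 10 (v_jet a * ([:1, -1:] + profile_jet a)) = poly_cutoff 10 (profile_jet a - [:1, -1:])"
  unfolding profile_jet_def v_jet_def
  by (simp only: jet_simps; (intro conjI TrueI)?; simp add: field_simps; algebra)

lemma v_jet_powers:
  "poly_cutoff 10 (v_jet a * v_jet a) = poly_cutoff 10 (v2_jet a)"
  "poly_cutoff 10 (v2_jet a * v2_jet a) = poly_cutoff 10 (v4_jet a)"
  "poly_cutoff 10 (v4_jet a * v2_jet a) = poly_cutoff 10 (v6_jet a)"
  "poly_cutoff 10 (v4_jet a * v4_jet a) = poly_cutoff 10 (v8_jet a)"
  by ((simp only: v_jet_def v2_jet_def v4_jet_def v6_jet_def v8_jet_def jet_simps;
      (intro conjI TrueI)?; simp add: field_simps; algebra)+)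

lemma w_jet_quotient:
  "poly_cutoff 10 (w_jet a * inner_mean_sum_jet a) =
     poly_cutoff 10 (pcompose (inner_mean_jet a) [:0, -1:] - inner_mean_jet a)"
  unfolding inner_mean_sum_jet_def inner_mean_jet_def profile_jet_def
    v2_jet_def v4_jet_def v6_jet_def v8_jet_def w_jet_def
  by (simp only: jet_simps; (intro conjI TrueI)?; simp add: field_simps; algebra)

lemma w_jet_powers:
  "poly_cutoff 10 (w_jet a * w_jet a) = poly_cutoff 10 (w2_jet a)"
  "poly_cutoff 10 (w2_jet a * w2_jet a) = poly_cutoff 10 (w4_jet a)"
  "poly_cutoff 10 (w4_jet a * w2_jet a) = poly_cutoff 10 (w6_jet a)"
  "poly_cutoff 10 (w4_jet a * w4_jet a) = poly_cutoff 10 (w8_jet a)"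
  by ((simp only: w_jet_def w2_jet_def w4_jet_def w6_jet_def w8_jet_def jet_simps;
      (intro conjI TrueI)?; simp add: field_simps; algebra)+)

lemma stability_jet_coefficients:
  assumes "poly_cutoff 10 (stability_rhs_jet a) = poly_cutoff 10 (profile_jet a)"
  shows "a 2 = 1/6 * a 1 * (1 + a 1) * (1 - 4 * a 1)"
    and "a 3 = 1/90 * a 1 * (1 + a 1) * (6 - 31 * a 1 + 36 * a 1 ^ 2 + 64 * a 1 ^ 3)"
    and "a 4 = 1/2520 * a 1 * (1 + a 1) * (90 - 531 * a 1 + 937 * a 1 ^ 2 + 568 * a 1 ^ 3
                  - 3088 * a 1 ^ 4 - 2176 * a 1 ^ 5)"
proof -
  have coeff_eq: "coeff (stability_rhs_jet a) k = coeff (profile_jet a) k" if "k < 10" for k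
    using assms that by (simp add: poly_cutoff_eq_iff)
  have "(4::nat) < 10" "(6::nat) < 10" "(8::nat) < 10"
    by simp_all
  note coeff_eq = coeff_eq[OF this(1)] coeff_eq[OF this(2)] coeff_eq[OF this(3)]
  note defs = stability_rhs_jet_def inner_mean_sum_jet_def inner_mean_jet_def profile_jet_def
    v2_jet_def v4_jet_def v6_jet_def v8_jet_def w2_jet_def w4_jet_def w6_jet_def w8_jet_def
  show a2: "a 2 = 1/6 * a 1 * (1 + a 1) * (1 - 4 * a 1)"
    using coeff_eq(1) by (simp only: defs jet_simps; simp add: field_simps; algebra)
  show a3: "a 3 = 1/90 * a 1 * (1 + a 1) * (6 - 31 * a 1 + 36 * a 1 ^ 2 + 64 * a 1 ^ 3)"
    using coeff_eq(2) a2 by (simp only: defs jet_simps; simp add: field_simps; algebra)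
  show "a 4 = 1/2520 * a 1 * (1 + a 1) * (90 - 531 * a 1 + 937 * a 1 ^ 2 + 568 * a 1 ^ 3
                  - 3088 * a 1 ^ 4 - 2176 * a 1 ^ 5)"
    using coeff_eq(3) a2 a3 by (simp only: defs jet_simps; simp add: field_simps; algebra)
qed

lemma agree_to_order_inner_mean:
  fixes F A :: "real \<Rightarrow> real"
  assumes jet: "agree_to_order 10 F (poly (profile_jet a))"
    and A: "\<And>u. \<bar>u\<bar> < 1 \<Longrightarrow> A u = (1 - u + F u) / 2 * F ((F u - (1 - u)) / (1 - u + F u))"
  shows "agree_to_order 10 A (poly (inner_mean_jet a))"
proof -
  have jet': "agree_to_order 10 F (poly [:1, 0, a 1, 0, a 2, 0, a 3, 0, a 4:])"
    using jet by (simp add: profile_jet_def)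
  have line: "agree_to_order 10 (\<lambda>u. 1 - u) (poly [:1, -1:])"
    by (rule agree_to_order_eventually_eq) simp
  have sum: "agree_to_order 10 (\<lambda>u. 1 - u + F u) (poly ([:1, -1:] + profile_jet a))"
    using agree_to_order_add[OF line jet] by (simp add: poly_add[abs_def])
  have diff: "agree_to_order 10 (\<lambda>u. F u - (1 - u)) (poly (profile_jet a - [:1, -1:]))"
    using agree_to_order_diff[OF jet line] by (simp add: poly_diff[abs_def])
  have v: "agree_to_order 10 (\<lambda>u. (F u - (1 - u)) / (1 - u + F u)) (poly (v_jet a))"
    using diff sum v_jet_quotient by (rule agree_to_order_divide_poly) (simp_all add: profile_jet_def)
  have "agree_to_order 10 (\<lambda>u. (1 - u + F u) / 2) (poly (smult (1/2) ([:1, -1:] + profile_jet a)))"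
    using agree_to_order_cmult[OF sum, of "1/2"] by (simp add: poly_smult[abs_def] poly_add[abs_def])
  moreover have "agree_to_order 10 (\<lambda>u. F ((F u - (1 - u)) / (1 - u + F u)))
      (poly (1 + smult (a 1) (v2_jet a) + smult (a 2) (v4_jet a) + smult (a 3) (v6_jet a) + smult (a 4) (v8_jet a)))"
    by (rule agree_to_order_compose_even_octic[OF jet' v _ _ v_jet_powers]) (simp_all add: v_jet_def)
  ultimately have A_prod: "agree_to_order 10 (\<lambda>u. (1 - u + F u) / 2 * F ((F u - (1 - u)) / (1 - u + F u)))
      (poly (inner_mean_jet a))"
    unfolding inner_mean_jet_def by (rule agree_to_order_mult_poly) (rule refl)
  have "eventually (\<lambda>u. A u = (1 - u + F u) / 2 * F ((F u - (1 - u)) / (1 - u + F u))) (nhds 0)"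
    using eventually_abs_less_nhds_0[OF zero_less_one] by eventually_elim (rule A)
  from agree_to_order_eventually_eq[OF this] A_prod show ?thesis
    by (rule agree_to_order_trans)
qed

lemma stability_equation_jet:
  fixes F A :: "real \<Rightarrow> real"
  assumes jet: "agree_to_order 10 F (poly (profile_jet a))"
    and A: "\<And>u. \<bar>u\<bar> < 1 \<Longrightarrow> A u = (1 - u + F u) / 2 * F ((F u - (1 - u)) / (1 - u + F u))"
    and F: "\<And>u. \<bar>u\<bar> < 1 \<Longrightarrow> F u = (A u + A (- u)) / 2 * F ((A (- u) - A u) / (A u + A (- u)))"
  shows "poly_cutoff 10 (stability_rhs_jet a) = poly_cutoff 10 (profile_jet a)"
proof -
  have jet': "agree_to_order 10 F (poly [:1, 0, a 1, 0, a 2, 0, a 3, 0, a 4:])"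
    using jet by (simp add: profile_jet_def)
  note A_jet = agree_to_order_inner_mean[OF jet A]
  note A_reflected = agree_to_order_reflect_poly[OF A_jet]
  have A_sum: "agree_to_order 10 (\<lambda>u. A u + A (- u)) (poly (inner_mean_sum_jet a))"
    using agree_to_order_add[OF A_jet A_reflected] by (simp add: inner_mean_sum_jet_def poly_add[abs_def])
  have "agree_to_order 10 (\<lambda>u. A (- u) - A u) (poly (pcompose (inner_mean_jet a) [:0, -1:] - inner_mean_jet a))"
    using agree_to_order_diff[OF A_reflected A_jet] by (simp add: poly_diff[abs_def])
  from this A_sum w_jet_quotient
  have "agree_to_order 10 (\<lambda>u. (A (- u) - A u) / (A u + A (- u))) (poly (w_jet a))"
    by (rule agree_to_order_divide_poly) (simp_all add: coeff_inner_mean_sum_jet_0)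
  then have "agree_to_order 10 (\<lambda>u. F ((A (- u) - A u) / (A u + A (- u))))
      (poly (1 + smult (a 1) (w2_jet a) + smult (a 2) (w4_jet a) + smult (a 3) (w6_jet a) + smult (a 4) (w8_jet a)))"
    by (rule agree_to_order_compose_even_octic[OF jet' _ _ _ w_jet_powers]) (simp_all add: w_jet_def)
  moreover have "agree_to_order 10 (\<lambda>u. (A u + A (- u)) / 2) (poly (smult (1/2) (inner_mean_sum_jet a)))"
    using agree_to_order_cmult[OF A_sum, of "1/2"] by (simp add: poly_smult[abs_def])
  ultimately have rhs: "agree_to_order 10 (\<lambda>u. F ((A (- u) - A u) / (A u + A (- u))) * ((A u + A (- u)) / 2))
      (poly (stability_rhs_jet a))"
    unfolding stability_rhs_jet_def by (rule agree_to_order_mult_poly) (rule refl)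
  have "eventually (\<lambda>u. F u = F ((A (- u) - A u) / (A u + A (- u))) * ((A u + A (- u)) / 2)) (nhds 0)"
    using eventually_abs_less_nhds_0[OF zero_less_one] by eventually_elim (simp add: F mult.commute)
  from agree_to_order_eventually_eq[OF this] rhs
  have "agree_to_order 10 F (poly (stability_rhs_jet a))"
    by (rule agree_to_order_trans)
  with agree_to_order_sym[OF jet] have "agree_to_order 10 (poly (profile_jet a)) (poly (stability_rhs_jet a))"
    by (rule agree_to_order_trans)
  then show ?thesis
    by (simp add: agree_to_order_poly_iff)
qed

section \<open>Profiles of homogeneous means\<close>

definition mean_profile :: "(real \<Rightarrow> real \<Rightarrow> real) \<Rightarrow> real \<Rightarrow> real" where
  "mean_profile M u = M (1 - u) (1 + u)"

lemma homogeneous_mean_profile: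
  assumes "homogeneous_mean M" "s > 0" "t > 0"
  shows "M s t = (s + t) / 2 * mean_profile M ((t - s) / (s + t))"
proof -
  define d where "d = (t - s) / (s + t)"
  have "(s + t) / 2 * (1 - d) = s" "(s + t) / 2 * (1 + d) = t" "1 - d > 0" "1 + d > 0"
    using assms(2,3) by (auto simp: d_def field_simps)
  with assms(1) show ?thesis
    unfolding homogeneous_mean_def mean_profile_def d_def[symmetric]
    by (metis add_pos_pos assms(2,3) half_gt_zero)
qed

lemma is_mean_pos: "is_mean M \<Longrightarrow> s > 0 \<Longrightarrow> t > 0 \<Longrightarrow> M s t > 0"
  unfolding is_mean_def by (smt (verit) min_def)

lemma mean_profile_bound:
  assumes "is_mean M" "\<bar>u\<bar> < 1"
  shows "\<bar>mean_profile M u - 1\<bar> \<le> \<bar>u\<bar>"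
  using assms unfolding is_mean_def mean_profile_def by (smt (verit) max_def min_def)

lemma mean_profile_even:
  assumes "symmetric_mean M" "\<bar>u\<bar> < 1"
  shows "mean_profile M (- u) = mean_profile M u"
  using assms unfolding symmetric_mean_def mean_profile_def by simp

lemma stable_mean_profile:
  assumes "is_mean M" "symmetric_mean M" "stable_mean M" "\<bar>u\<bar> < 1"
  shows "mean_profile M u = M (M (1 - u) (mean_profile M u)) (M (1 - (- u)) (mean_profile M (- u)))"
proof -
  have pos: "mean_profile M u > 0"
    using mean_profile_bound[OF assms(1,4)] assms(4) by linarith
  have "mean_profile M u = M (M (1 - u) (mean_profile M u)) (M (mean_profile M u) (1 + u))"
    using assms(3,4) unfolding stable_mean_def mean_profile_def by simp
  also have "M (mean_profile M u) (1 + u) = M (1 - (- u)) (mean_profile M (- u))"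
    using assms(2,4) pos mean_profile_even[OF assms(2,4)] unfolding symmetric_mean_def by simp
  finally show ?thesis .
qed

lemma mult_inverse_power_int:
  fixes u :: real
  assumes "u \<noteq> 0"
  shows "u * inverse u powi (1 - 2 * int n) = u ^ (2 * n)"
proof -
  have "u powi (2 * int n) = u ^ (2 * n)"
    using power_int_of_nat[of u "2 * n"] by simp
  then have "u powi (1 - 2 * int n) = u / u ^ (2 * n)"
    using assms by (simp add: power_int_diff)
  then show ?thesis
    using assms by (simp add: power_int_inverse)
qed

lemma mean_profile_rescale:
  assumes "homogeneous_mean M" "0 < u" "u < 1"
  shows "u * (M (inverse u - 1) (inverse u + 1)
        - (\<Sum>n\<le>N. a n * 1 ^ (2 * n) * inverse u powi (1 - 2 * int n)))
      = mean_profile M u - (\<Sum>n\<le>N. a n * u ^ (2 * n))"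
proof -
  have "M (inverse u * (1 - u)) (inverse u * (1 + u)) = inverse u * mean_profile M u"
    using assms unfolding homogeneous_mean_def mean_profile_def by simp
  moreover have "inverse u * (1 - u) = inverse u - 1" "inverse u * (1 + u) = inverse u + 1"
    using assms(2) by (simp_all add: field_simps)
  ultimately have "u * M (inverse u - 1) (inverse u + 1) = mean_profile M u"
    using assms(2) by simp
  moreover have "u * (\<Sum>n\<le>N. a n * 1 ^ (2 * n) * inverse u powi (1 - 2 * int n))
      = (\<Sum>n\<le>N. a n * u ^ (2 * n))"
    unfolding sum_distrib_left
  proof (rule sum.cong)
    show "u * (a n * 1 ^ (2 * n) * inverse u powi (1 - 2 * int n)) = a n * u ^ (2 * n)" for n
      using assms(2) mult_inverse_power_int[of u n] by (simp add: mult.left_commute)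
  qed simp
  ultimately show ?thesis
    by (simp add: right_diff_distrib)
qed

lemma mean_profile_expansion:
  assumes "homogeneous_mean M" "has_sym_asymp_expansion M a"
  shows "(\<lambda>u. mean_profile M u - (\<Sum>n\<le>N. a n * u ^ (2 * n))) \<in> o[at_right 0](\<lambda>u. u ^ (2 * N))"
proof -
  have "(\<lambda>x. M (x - 1) (x + 1) - (\<Sum>n\<le>N. a n * 1 ^ (2 * n) * x powi (1 - 2 * int n)))
      \<in> o[at_top](\<lambda>x. x powi (1 - 2 * int N))"
    using assms(2) unfolding has_sym_asymp_expansion_def by blast
  from landau_o.small.compose[OF this filterlim_inverse_at_top_right]
  have small: "(\<lambda>u. u * (M (inverse u - 1) (inverse u + 1)
        - (\<Sum>n\<le>N. a n * 1 ^ (2 * n) * inverse u powi (1 - 2 * int n))))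
      \<in> o[at_right 0](\<lambda>u. u * inverse u powi (1 - 2 * int N))"
    by (rule landau_o.small.mult_left)
  have lhs: "eventually (\<lambda>u. u * (M (inverse u - 1) (inverse u + 1)
        - (\<Sum>n\<le>N. a n * 1 ^ (2 * n) * inverse u powi (1 - 2 * int n)))
      = mean_profile M u - (\<Sum>n\<le>N. a n * u ^ (2 * n))) (at_right 0)"
    using eventually_at_right_real[OF zero_less_one]
    by eventually_elim (rule mean_profile_rescale[OF assms(1)]; simp)
  have rhs: "eventually (\<lambda>u. u * inverse u powi (1 - 2 * int N) = u ^ (2 * N)) (at_right (0::real))"
    using eventually_at_right_real[OF zero_less_one]
    by eventually_elim (simp add: mult_inverse_power_int)
  from small landau_o.small.in_cong[OF lhs] landau_o.small.cong[OF rhs] show ?thesis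
    by simp
qed

text \<open>The expansion controls the profile only for \<open>u > 0\<close>; evenness transports the bound to \<open>u < 0\<close>.\<close>

lemma mean_profile_bigo_at_0:
  assumes "symmetric_mean M" "homogeneous_mean M" "has_sym_asymp_expansion M a"
  shows "(\<lambda>u. mean_profile M u - poly [:a 0, 0, a 1, 0, a 2, 0, a 3, 0, a 4:] u) \<in> O[at 0](\<lambda>u. u ^ 10)"
proof -
  define F where "F = mean_profile M"
  define R where "R = poly [:a 0, 0, a 1, 0, a 2, 0, a 3, 0, a 4:]"
  have "(\<lambda>u. F u - (\<Sum>n\<le>5. a n * u ^ (2 * n))) \<in> O[at_right 0](\<lambda>u. u ^ 10)"
    using landau_o.small_imp_big[OF mean_profile_expansion[OF assms(2,3), of 5]] by (simp add: F_def)
  moreover have "(\<lambda>u. a 5 * u ^ 10) \<in> O[at_right 0](\<lambda>u::real. u ^ 10)"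
    by simp
  ultimately have "(\<lambda>u. F u - (\<Sum>n\<le>5. a n * u ^ (2 * n)) + a 5 * u ^ 10) \<in> O[at_right 0](\<lambda>u. u ^ 10)"
    by (rule sum_in_bigo(1))
  moreover have "(\<lambda>u. F u - (\<Sum>n\<le>5. a n * u ^ (2 * n)) + a 5 * u ^ 10) = (\<lambda>u. F u - R u)"
    by (simp add: R_def fun_eq_iff eval_nat_numeral algebra_simps)
  ultimately have right: "(\<lambda>u. F u - R u) \<in> O[at_right 0](\<lambda>u. u ^ 10)"
    by simp
  have "eventually (\<lambda>u. F (- u) - R (- u) = F u - R u) (at_right 0)"
    using eventually_at_right_real[OF zero_less_one]
    by eventually_elim (simp add: F_def R_def mean_profile_even[OF assms(1)])
  with right have "(\<lambda>u. F (- u) - R (- u)) \<in> O[at_right 0](\<lambda>u. (- u) ^ 10)"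
    by (simp add: landau_o.big.in_cong)
  then have left: "(\<lambda>u. F u - R u) \<in> O[at_left 0](\<lambda>u. u ^ 10)"
    by (simp add: at_left_minus landau_o.big.in_filtermap_iff)
  from landau_o.big.sup[OF left right] show ?thesis
    by (simp add: at_eq_sup_left_right F_def R_def)
qed

lemma mean_profile_jet:
  assumes "is_mean M" "symmetric_mean M" "homogeneous_mean M" "has_sym_asymp_expansion M a"
  shows "a 0 = 1" and "agree_to_order 10 (mean_profile M) (poly (profile_jet a))"
proof -
  define F where "F = mean_profile M"
  define R where "R = poly [:a 0, 0, a 1, 0, a 2, 0, a 3, 0, a 4:]"
  have at_0: "(\<lambda>u. F u - R u) \<in> O[at 0](\<lambda>u. u ^ 10)"
    using mean_profile_bigo_at_0[OF assms(2,3,4)] by (simp add: F_def R_def)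
  have "eventually (\<lambda>u::real. \<bar>u\<bar> < 1) (at 0)"
    using eventually_abs_less_nhds_0[OF zero_less_one] by (simp add: eventually_nhds_conv_at)
  then have "((\<lambda>u. F u - 1) \<longlongrightarrow> 0) (at 0)"
  proof (rule Lim_null_comparison[OF eventually_mono])
    show "\<bar>u\<bar> < 1 \<Longrightarrow> norm (F u - 1) \<le> \<bar>u\<bar>" for u
      by (simp add: F_def mean_profile_bound[OF assms(1)])
    show "((\<lambda>u::real. \<bar>u\<bar>) \<longlongrightarrow> 0) (at 0)"
      by (rule tendsto_rabs_zero) (rule tendsto_ident_at)
  qed
  then have "F \<midarrow>0\<rightarrow> 1"
    by (rule LIM_zero_cancel)
  moreover have "R \<midarrow>0\<rightarrow> a 0"
    using poly_isCont[of 0 "[:a 0, 0, a 1, 0, a 2, 0, a 3, 0, a 4:]", unfolded isCont_def]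
    by (simp add: R_def)
  ultimately have "(\<lambda>u. F u - R u) \<midarrow>0\<rightarrow> 1 - a 0"
    by (rule tendsto_diff)
  moreover have "((\<lambda>u::real. u ^ 10) \<longlongrightarrow> 0 ^ 10) (at 0)"
    by (intro tendsto_power tendsto_ident_at)
  then have "(\<lambda>u. F u - R u) \<midarrow>0\<rightarrow> 0"
    using bigo_imp_tendsto_zero[OF at_0] by simp
  ultimately have "1 - a 0 = 0"
    by (rule LIM_unique)
  then show a0: "a 0 = 1"
    by simp
  have "F 0 = 1"
    using mean_profile_bound[OF assms(1), of 0] by (simp add: F_def)
  then have "(\<lambda>u. F u - R u) \<in> O[nhds 0](\<lambda>u. u ^ 10)"
    using at_0 by (intro bigo_nhds_of_at) (simp_all add: R_def a0)
  moreover have "R = poly (profile_jet a)"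
    by (simp add: R_def profile_jet_def a0)
  ultimately show "agree_to_order 10 (mean_profile M) (poly (profile_jet a))"
    by (simp add: agree_to_order_def F_def)
qed

lemma stable_mean_coefficients:
  assumes "is_mean M" "symmetric_mean M" "homogeneous_mean M" "stable_mean M"
    and "has_sym_asymp_expansion M a"
  shows "a 2 = 1/6 * a 1 * (1 + a 1) * (1 - 4 * a 1)"
    and "a 3 = 1/90 * a 1 * (1 + a 1) * (6 - 31 * a 1 + 36 * a 1 ^ 2 + 64 * a 1 ^ 3)"
    and "a 4 = 1/2520 * a 1 * (1 + a 1) * (90 - 531 * a 1 + 937 * a 1 ^ 2 + 568 * a 1 ^ 3
                  - 3088 * a 1 ^ 4 - 2176 * a 1 ^ 5)"
proof -
  define F where "F = mean_profile M"
  define A where "A u = M (1 - u) (F u)" for u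
  have F_pos: "F u > 0" if "\<bar>u\<bar> < 1" for u
    using mean_profile_bound[OF assms(1) that] that by (simp add: F_def)
  have A_pos: "A u > 0" if "\<bar>u\<bar> < 1" for u
    using is_mean_pos[OF assms(1) _ F_pos[OF that]] that by (simp add: A_def)
  have A_eq: "A u = (1 - u + F u) / 2 * F ((F u - (1 - u)) / (1 - u + F u))" if "\<bar>u\<bar> < 1" for u
    using homogeneous_mean_profile[OF assms(3), of "1 - u" "F u"] F_pos[OF that] that
    by (simp add: A_def F_def)
  have F_eq: "F u = (A u + A (- u)) / 2 * F ((A (- u) - A u) / (A u + A (- u)))" if "\<bar>u\<bar> < 1" for u
  proof -
    have "F u = M (A u) (A (- u))"
      using stable_mean_profile[OF assms(1,2,4) that] by (simp add: A_def F_def)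
    also have "\<dots> = (A u + A (- u)) / 2 * F ((A (- u) - A u) / (A u + A (- u)))"
      using homogeneous_mean_profile[OF assms(3) A_pos A_pos] that by (simp add: F_def)
    finally show ?thesis .
  qed
  have "agree_to_order 10 F (poly (profile_jet a))"
    using mean_profile_jet(2)[OF assms(1,2,3,5)] by (simp add: F_def)
  from stability_jet_coefficients[OF stability_equation_jet[OF this A_eq F_eq]]
  show "a 2 = 1/6 * a 1 * (1 + a 1) * (1 - 4 * a 1)"
    and "a 3 = 1/90 * a 1 * (1 + a 1) * (6 - 31 * a 1 + 36 * a 1 ^ 2 + 64 * a 1 ^ 3)"
    and "a 4 = 1/2520 * a 1 * (1 + a 1) * (90 - 531 * a 1 + 937 * a 1 ^ 2 + 568 * a 1 ^ 3
                  - 3088 * a 1 ^ 4 - 2176 * a 1 ^ 5)"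
    by simp_all
qed

lemma has_sym_asymp_expansion_bigo:
  assumes "has_sym_asymp_expansion M a"
  shows "(\<lambda>x. M (x - t) (x + t) - (\<Sum>n\<le>N. a n * t ^ (2 * n) * x powi (1 - 2 * int n)))
    \<in> O[at_top](\<lambda>x. x powi (- 1 - 2 * int N))"
proof -
  have exponent: "1 - 2 * int (Suc N) = - 1 - 2 * int N"
    by simp
  have "(\<lambda>x. M (x - t) (x + t) - (\<Sum>n\<le>Suc N. a n * t ^ (2 * n) * x powi (1 - 2 * int n)))
      \<in> O[at_top](\<lambda>x. x powi (- 1 - 2 * int N))"
    using assms[unfolded has_sym_asymp_expansion_def, rule_format, of t "Suc N"]
    unfolding exponent by (rule landau_o.small_imp_big)
  moreover have "(\<lambda>x. a (Suc N) * t ^ (2 * Suc N) * x powi (- 1 - 2 * int N))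
      \<in> O[at_top](\<lambda>x. x powi (- 1 - 2 * int N))"
    by simp
  ultimately have "(\<lambda>x. M (x - t) (x + t) - (\<Sum>n\<le>Suc N. a n * t ^ (2 * n) * x powi (1 - 2 * int n))
      + a (Suc N) * t ^ (2 * Suc N) * x powi (- 1 - 2 * int N)) \<in> O[at_top](\<lambda>x. x powi (- 1 - 2 * int N))"
    by (rule sum_in_bigo(1))
  then show ?thesis
    by (simp add: exponent)
qed

theorem mainTheorem4:
  fixes M :: "real \<Rightarrow> real \<Rightarrow> real" and a :: "nat \<Rightarrow> real" and t :: real
  assumes "is_mean M" and "symmetric_mean M" and "homogeneous_mean M" and "stable_mean M"
    and "has_sym_asymp_expansion M a"
  shows "(\<lambda>x. M (x - t) (x + t)
           - (x + a 1 * t ^ 2 * x powi (-1)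
              + 1/6 * a 1 * (1 + a 1) * (1 - 4 * a 1) * t ^ 4 * x powi (-3)
              + 1/90 * a 1 * (1 + a 1) * (6 - 31 * a 1 + 36 * a 1 ^ 2 + 64 * a 1 ^ 3)
                  * t ^ 6 * x powi (-5)
              + 1/2520 * a 1 * (1 + a 1) * (90 - 531 * a 1 + 937 * a 1 ^ 2 + 568 * a 1 ^ 3
                  - 3088 * a 1 ^ 4 - 2176 * a 1 ^ 5) * t ^ 8 * x powi (-7)))
         \<in> O[at_top](\<lambda>x. x powi (-9))"
proof -
  have "(\<lambda>x. M (x - t) (x + t) - (\<Sum>n\<le>4. a n * t ^ (2 * n) * x powi (1 - 2 * int n)))
      \<in> O[at_top](\<lambda>x. x powi (-9))"
    using has_sym_asymp_expansion_bigo[OF assms(5), of t 4] by simp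
  moreover have "(\<Sum>n\<le>4. a n * t ^ (2 * n) * x powi (1 - 2 * int n)) =
      x + a 1 * t ^ 2 * x powi (-1) + a 2 * t ^ 4 * x powi (-3) + a 3 * t ^ 6 * x powi (-5)
        + a 4 * t ^ 8 * x powi (-7)" for x
    using mean_profile_jet(1)[OF assms(1,2,3,5)] by (simp add: eval_nat_numeral)
  ultimately show ?thesis
    by (simp only: stable_mean_coefficients[OF assms])
qed

end
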